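(* Let $N,M_t,M_r$ be positive integers, $P_0>0$, $\sigma^2>0$, $\alpha\in\mathbb C\setminus\{0\}$, $L>0$, $\theta,\theta_1,\theta_2\in\mathbb R$, and let $\mathbf G_t=\sqrt{L}\,\mathbf a(\theta_2)\mathbf c^T(\theta_1)$, $\mathbf G_r=\sqrt{L}\,\mathbf b(\theta_1)\mathbf a^T(\theta_2)$. If $N>1/\sqrt{L}$, then $\mathrm{SNR}_1^\star>\mathrm{SNR}_2^\star$, where $\mathrm{SNR}_i^\star=\max_{\mathbf R,\mathbf\Phi}\mathrm{SNR}_i(\mathbf R,\mathbf\Phi)$ with the maximum over positive semidefinite $\mathbf R\in\mathbb C^{M_t\times M_t}$ with $\mathrm{tr}(\mathbf R)\le P_0$ and $\mathbf\Phi=\mathrm{diag}(e^{j\phi_1},\dots,e^{j\phi_N})$, $\phi_n\in\mathbb R$.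
   Context: $j=\sqrt{-1}$. Fix $\hat d>0$, $\lambda>0$. For a positive integer $K$, $\mathbf s_K(\theta)\in\mathbb C^K$ has $k$-th entry $e^{j\pi(2k-K-1)\hat d\sin\theta/\lambda}$. Set $\mathbf a(\theta)=\mathbf s_N(\theta)$, $\mathbf b(\theta)=\mathbf s_{M_r}(\theta)$, $\mathbf c(\theta)=\mathbf s_{M_t}(\theta)$. Define $\mathrm{SNR}_1(\mathbf R,\mathbf\Phi)=\frac{|\alpha|^2\|\mathbf G_r\mathbf\Phi^T\mathbf a(\theta)\|^2\,\mathbf a^T(\theta)\mathbf\Phi\mathbf G_t\mathbf R\mathbf G_t^H\mathbf\Phi^H\mathbf a^*(\theta)}{\sigma^2}$, $\mathrm{SNR}_2(\mathbf R,\mathbf\Phi)=\frac{|\alpha|^2\|\mathbf b(\theta)\|^2\,\mathbf a^T(\theta)\mathbf\Phi\mathbf G_t\mathbf R\mathbf G_t^H\mathbf\Phi^H\mathbf a^*(\theta)}{\sigma^2}$. *)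

theory Defs
  imports "HOL-Analysis.Analysis"
begin

text \<open>Vectors in C^K are functions nat => complex on indices 0..K-1 (index k here is the
paper's k+1); matrices are functions nat => nat => complex with explicit dimensions.\<close>

definition steer :: "real \<Rightarrow> real \<Rightarrow> nat \<Rightarrow> real \<Rightarrow> nat \<Rightarrow> complex" where
  "steer d lam K th k = exp (\<i> * complex_of_real
      (pi * (2 * real (k + 1) - real K - 1) * d * sin th / lam))"

definition Gt :: "real \<Rightarrow> real \<Rightarrow> nat \<Rightarrow> nat \<Rightarrow> real \<Rightarrow> real \<Rightarrow> real \<Rightarrow> nat \<Rightarrow> nat \<Rightarrow> complex" where
  "Gt d lam N Mt L th1 th2 i m = complex_of_real (sqrt L) * steer d lam N th2 i * steer d lam Mt th1 m"

definition Gr :: "real \<Rightarrow> real \<Rightarrow> nat \<Rightarrow> nat \<Rightarrow> real \<Rightarrow> real \<Rightarrow> real \<Rightarrow> nat \<Rightarrow> nat \<Rightarrow> complex" where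
  "Gr d lam N Mr L th1 th2 r i = complex_of_real (sqrt L) * steer d lam Mr th1 r * steer d lam N th2 i"

definition Phi :: "(nat \<Rightarrow> real) \<Rightarrow> nat \<Rightarrow> nat \<Rightarrow> complex" where
  "Phi ph i i' = (if i = i' then exp (\<i> * complex_of_real (ph i)) else 0)"

definition quad_term :: "real \<Rightarrow> real \<Rightarrow> nat \<Rightarrow> nat \<Rightarrow> real \<Rightarrow> real \<Rightarrow> real \<Rightarrow> real
     \<Rightarrow> (nat \<Rightarrow> nat \<Rightarrow> complex) \<Rightarrow> (nat \<Rightarrow> real) \<Rightarrow> complex" where
  "quad_term d lam N Mt L th th1 th2 R ph =
     (let v = (\<lambda>m. \<Sum>i<N. \<Sum>i'<N. steer d lam N th i * Phi ph i i' * Gt d lam N Mt L th1 th2 i' m)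
      in \<Sum>m<Mt. \<Sum>m'<Mt. v m * R m m' * cnj (v m'))"

definition sqnorm :: "nat \<Rightarrow> (nat \<Rightarrow> complex) \<Rightarrow> real" where
  "sqnorm K x = (\<Sum>k<K. (cmod (x k))\<^sup>2)"

definition SNR1 :: "real \<Rightarrow> real \<Rightarrow> nat \<Rightarrow> nat \<Rightarrow> nat \<Rightarrow> real \<Rightarrow> real \<Rightarrow> real \<Rightarrow> real \<Rightarrow> complex \<Rightarrow> real
     \<Rightarrow> (nat \<Rightarrow> nat \<Rightarrow> complex) \<Rightarrow> (nat \<Rightarrow> real) \<Rightarrow> complex" where
  "SNR1 d lam N Mt Mr L th th1 th2 \<alpha> \<sigma>2 R ph =
     complex_of_real ((cmod \<alpha>)\<^sup>2 *
       sqnorm Mr (\<lambda>r. \<Sum>i<N. \<Sum>i'<N. Gr d lam N Mr L th1 th2 r i * Phi ph i' i * steer d lam N th i'))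
     * quad_term d lam N Mt L th th1 th2 R ph / complex_of_real \<sigma>2"

definition SNR2 :: "real \<Rightarrow> real \<Rightarrow> nat \<Rightarrow> nat \<Rightarrow> nat \<Rightarrow> real \<Rightarrow> real \<Rightarrow> real \<Rightarrow> real \<Rightarrow> complex \<Rightarrow> real
     \<Rightarrow> (nat \<Rightarrow> nat \<Rightarrow> complex) \<Rightarrow> (nat \<Rightarrow> real) \<Rightarrow> complex" where
  "SNR2 d lam N Mt Mr L th th1 th2 \<alpha> \<sigma>2 R ph =
     complex_of_real ((cmod \<alpha>)\<^sup>2 * sqnorm Mr (steer d lam Mr th))
     * quad_term d lam N Mt L th th1 th2 R ph / complex_of_real \<sigma>2"

definition psd :: "nat \<Rightarrow> (nat \<Rightarrow> nat \<Rightarrow> complex) \<Rightarrow> bool" where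
  "psd K R \<longleftrightarrow> (\<forall>i<K. \<forall>j<K. R i j = cnj (R j i)) \<and>
     (\<forall>x :: nat \<Rightarrow> complex. 0 \<le> Re (\<Sum>i<K. \<Sum>j<K. cnj (x i) * R i j * x j))"

definition trace :: "nat \<Rightarrow> (nat \<Rightarrow> nat \<Rightarrow> complex) \<Rightarrow> complex" where
  "trace K R = (\<Sum>i<K. R i i)"

text \<open>Feasible set: R PSD with tr(R) <= P0 (trace of a Hermitian matrix is real), arbitrary phases.\<close>
definition feasible :: "nat \<Rightarrow> real \<Rightarrow> (nat \<Rightarrow> nat \<Rightarrow> complex) \<Rightarrow> bool" where
  "feasible Mt P0 R \<longleftrightarrow> psd Mt R \<and> Re (trace Mt R) \<le> P0"

end

theory Submission
  imports Defs
begin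

text \<open>Both SNRs factor through the cascaded array gain \<open>g(\<Phi>) = a\<^sup>T(\<theta>) \<Phi> a(\<theta>\<^sub>2)\<close> and the
  transmit beam power \<open>Q(R) = c\<^sup>T(\<theta>\<^sub>1) R c\<^sup>*(\<theta>\<^sub>1) \<ge> 0\<close>: up to the same positive constant,
  \<open>SNR\<^sub>1 = L\<^sup>2 |g|\<^sup>4 Q\<close> and \<open>SNR\<^sub>2 = L |g|\<^sup>2 Q\<close>. Since \<open>|g| \<le> N\<close> with equality for co-phased
  \<open>\<Phi>\<^sub>0\<close>, every value \<open>SNR\<^sub>2(R, \<Phi>)\<close> is at most \<open>SNR\<^sub>1(R, \<Phi>\<^sub>0) / (L N\<^sup>2)\<close>. As \<open>L N\<^sup>2 > 1\<close>
  and the supremum of \<open>SNR\<^sub>1\<close> is positive and finite (a PSD \<open>R\<close> of bounded trace has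
  bounded \<open>Q\<close>), the inequality between the suprema is strict.\<close>

lemma SUP_less_SUP_scaled:
  fixes f g :: "'a \<Rightarrow> real"
  assumes bdd: "bdd_above (f ` A)" and "x0 \<in> A" "0 < f x0" "1 < c"
    and dominated: "\<And>x. x \<in> A \<Longrightarrow> \<exists>y\<in>A. c * g x \<le> f y"
  shows "(SUP x\<in>A. g x) < (SUP x\<in>A. f x)"
proof -
  have "f x0 \<le> (SUP x\<in>A. f x)"
    using \<open>x0 \<in> A\<close> bdd by (rule cSUP_upper)
  then have Sup_pos: "0 < (SUP x\<in>A. f x)"
    using \<open>0 < f x0\<close> by linarith
  have "(SUP x\<in>A. g x) \<le> (SUP x\<in>A. f x) / c"
  proof (rule cSUP_least)
    show "A \<noteq> {}" using \<open>x0 \<in> A\<close> by blast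
  next
    fix x assume "x \<in> A"
    then obtain y where "y \<in> A" "c * g x \<le> f y"
      using dominated by blast
    moreover have "f y \<le> (SUP x\<in>A. f x)"
      using \<open>y \<in> A\<close> bdd by (rule cSUP_upper)
    ultimately show "g x \<le> (SUP x\<in>A. f x) / c"
      using \<open>1 < c\<close> by (simp add: pos_le_divide_eq mult.commute)
  qed
  also have "\<dots> < (SUP x\<in>A. f x)"
    using Sup_pos \<open>1 < c\<close> by (simp add: divide_less_eq)
  finally show ?thesis .
qed

lemma exp_neg_Arg_mult: "exp (\<i> * complex_of_real (- Arg z)) * z = complex_of_real (cmod z)"
  by (metis cis_conv_exp cis_mult rcis_cmod_Arg rcis_def add.left_inverse cis_zero
      mult.left_commute mult.right_neutral)

(* c\<^sup>T R (cnj c); the form in psd_def is this one evaluated at cnj x *)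
definition quad_form :: "nat \<Rightarrow> (nat \<Rightarrow> nat \<Rightarrow> complex) \<Rightarrow> (nat \<Rightarrow> complex) \<Rightarrow> complex" where
  "quad_form K R c = (\<Sum>m<K. \<Sum>m'<K. c m * R m m' * cnj (c m'))"

lemma psd_iff_quad_form_nonneg:
  "psd K R \<longleftrightarrow> (\<forall>i<K. \<forall>j<K. R i j = cnj (R j i)) \<and> (\<forall>c. 0 \<le> Re (quad_form K R c))"
proof -
  have "(\<Sum>i<K. \<Sum>j<K. cnj (x i) * R i j * x j) = quad_form K R (\<lambda>k. cnj (x k))" for x
    by (simp add: quad_form_def)
  moreover have "quad_form K R c = quad_form K R (\<lambda>k. cnj (cnj (c k)))" for c
    by simp
  ultimately show ?thesis
    unfolding psd_def by metis
qed

lemma psd_hermitian: "psd K R \<Longrightarrow> i < K \<Longrightarrow> j < K \<Longrightarrow> R j i = cnj (R i j)"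
  unfolding psd_def by blast

lemma psd_quad_form_nonneg: "psd K R \<Longrightarrow> 0 \<le> Re (quad_form K R c)"
  unfolding psd_iff_quad_form_nonneg by blast

lemma quad_form_eq_sum_support:
  assumes "S \<subseteq> {..<K}" and "\<And>k. k \<notin> S \<Longrightarrow> c k = 0"
  shows "quad_form K R c = (\<Sum>m\<in>S. \<Sum>m'\<in>S. c m * R m m' * cnj (c m'))"
proof -
  have "quad_form K R c = (\<Sum>m\<in>S. \<Sum>m'<K. c m * R m m' * cnj (c m'))"
    unfolding quad_form_def by (rule sum.mono_neutral_right) (use assms in auto)
  also have "\<dots> = (\<Sum>m\<in>S. \<Sum>m'\<in>S. c m * R m m' * cnj (c m'))"
  proof (rule sum.cong[OF refl])
    fix m
    show "(\<Sum>m'<K. c m * R m m' * cnj (c m')) = (\<Sum>m'\<in>S. c m * R m m' * cnj (c m'))"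
      by (rule sum.mono_neutral_right) (use assms in auto)
  qed
  finally show ?thesis .
qed

lemma psd_diag_nonneg:
  assumes "psd K R" "i < K"
  shows "0 \<le> Re (R i i)"
  using psd_quad_form_nonneg[OF assms(1), of "\<lambda>k. if k = i then 1 else 0"]
    quad_form_eq_sum_support[of "{i}" K "\<lambda>k. if k = i then 1 else 0" R] assms(2)
  by simp

lemma psd_two_point:
  assumes "psd K R" "i < K" "j < K" "i \<noteq> j"
  shows "0 \<le> Re (R i i + R i j * cnj t + t * R j i + t * cnj t * R j j)"
proof -
  let ?c = "\<lambda>k. if k = i then 1 else if k = j then t else 0"
  have "quad_form K R ?c = R i i + R i j * cnj t + t * R j i + t * cnj t * R j j"
    using assms(2-4)
    by (subst quad_form_eq_sum_support[of "{i, j}"]) (auto simp: algebra_simps)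
  then show ?thesis
    using psd_quad_form_nonneg[OF assms(1), of ?c] by simp
qed

lemma psd_entry_bound:
  assumes "psd K R" "i < K" "j < K"
  shows "2 * cmod (R i j) \<le> Re (R i i) + Re (R j j)"
proof (cases "i = j")
  case True
  have "Im (R i i) = 0"
    using psd_hermitian[OF assms(1,2,2)] by (metis Reals_cnj_iff complex_is_Real_iff)
  then show ?thesis
    using True psd_diag_nonneg[OF assms(1,2)] by (simp add: cmod_eq_Re)
next
  case False
  \<comment> \<open>test vector \<open>e\<^sub>i + t e\<^sub>j\<close> with \<open>t\<close> chosen against the phase of \<open>R\<^sub>i\<^sub>j\<close>\<close>
  define t where "t = - sgn (R i j)"
  have Rt: "R i j * cnj t = - complex_of_real (cmod (R i j))"
    by (cases "R i j = 0")
      (simp_all add: t_def sgn_eq complex_norm_square[symmetric] power2_eq_square)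
  have "t * R j i = cnj (R i j * cnj t)"
    by (simp add: psd_hermitian[OF assms] mult.commute)
  then have tR: "t * R j i = - complex_of_real (cmod (R i j))"
    by (simp add: Rt)
  have "Re (t * cnj t * R j j) = (cmod t)\<^sup>2 * Re (R j j)"
    by (simp flip: complex_norm_square)
  also have "\<dots> \<le> Re (R j j)"
    using psd_diag_nonneg[OF assms(1,3)]
    by (intro mult_left_le_one_le) (simp_all add: t_def norm_sgn power_le_one)
  finally show ?thesis
    using psd_two_point[OF assms False, of t] by (simp add: Rt tR)
qed

lemma norm_quad_form_le:
  assumes "psd K R" and unit: "\<And>k. k < K \<Longrightarrow> cmod (c k) \<le> 1"
  shows "cmod (quad_form K R c) \<le> real K * Re (trace K R)"
proof -
  have "cmod (quad_form K R c) \<le> (\<Sum>m<K. \<Sum>m'<K. cmod (c m * R m m' * cnj (c m')))"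
    unfolding quad_form_def by (rule order_trans[OF norm_sum sum_mono[OF norm_sum]])
  also have "\<dots> \<le> (\<Sum>m<K. \<Sum>m'<K. (Re (R m m) + Re (R m' m')) / 2)"
  proof (intro sum_mono)
    fix m m' assume "m \<in> {..<K}" "m' \<in> {..<K}"
    then have "cmod (c m) * cmod (R m m') * cmod (c m') \<le> 1 * cmod (R m m') * 1"
      using unit by (intro mult_mono) simp_all
    then show "cmod (c m * R m m' * cnj (c m')) \<le> (Re (R m m) + Re (R m' m')) / 2"
      using psd_entry_bound[OF assms(1), of m m'] \<open>m \<in> {..<K}\<close> \<open>m' \<in> {..<K}\<close>
      by (simp add: norm_mult)
  qed
  also have "\<dots> = real K * Re (trace K R)"
    by (simp add: trace_def sum.distrib add_divide_distrib Re_sum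
        flip: sum_divide_distrib sum_distrib_left)
  finally show ?thesis .
qed

lemma feasible_quad_form_le:
  assumes "feasible K P R" and "\<And>k. k < K \<Longrightarrow> cmod (c k) \<le> 1"
  shows "Re (quad_form K R c) \<le> real K * P"
proof -
  have "Re (quad_form K R c) \<le> cmod (quad_form K R c)"
    by (rule complex_Re_le_cmod)
  also have "\<dots> \<le> real K * Re (trace K R)"
    using assms by (intro norm_quad_form_le) (simp_all add: feasible_def)
  also have "\<dots> \<le> real K * P"
    using assms(1) by (intro mult_left_mono) (simp_all add: feasible_def)
  finally show ?thesis .
qed

lemma sqnorm_nonneg: "0 \<le> sqnorm K x"
  unfolding sqnorm_def by (simp add: sum_nonneg)

lemma quad_form_scalar_matrix:
  "quad_form K (\<lambda>i j. if i = j then a else 0) c = a * complex_of_real (sqnorm K c)"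
proof -
  have "quad_form K (\<lambda>i j. if i = j then a else 0) c = (\<Sum>m<K. a * (c m * cnj (c m)))"
    unfolding quad_form_def
    by (intro sum.cong refl) (simp add: if_distrib if_distribR cong: if_cong)
  then show ?thesis
    by (simp add: sqnorm_def sum_distrib_left flip: complex_norm_square)
qed

lemma psd_scalar_matrix: "0 \<le> p \<Longrightarrow> psd K (\<lambda>i j. if i = j then complex_of_real p else 0)"
  unfolding psd_iff_quad_form_nonneg by (simp add: quad_form_scalar_matrix sqnorm_nonneg)

lemma feasible_uniform_power:
  assumes "0 < K" "0 \<le> P"
  shows "feasible K P (\<lambda>i j. if i = j then complex_of_real (P / real K) else 0)"
  using assms by (simp add: feasible_def psd_scalar_matrix trace_def)

lemma norm_steer [simp]: "cmod (steer d lam K th k) = 1"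
  unfolding steer_def by (simp add: norm_exp_i_times)

lemma sqnorm_steer: "sqnorm K (steer d lam K th) = real K"
  by (simp add: sqnorm_def)

lemma Phi_sym: "Phi ph i j = Phi ph j i"
  by (auto simp: Phi_def)

lemma sum_Phi:
  assumes "i < N"
  shows "(\<Sum>j<N. f j * Phi ph i j * g j) = f i * exp (\<i> * complex_of_real (ph i)) * g i"
  using assms by (simp add: Phi_def if_distrib if_distribR cong: if_cong)

definition phase_gain :: "real \<Rightarrow> real \<Rightarrow> nat \<Rightarrow> real \<Rightarrow> real \<Rightarrow> (nat \<Rightarrow> real) \<Rightarrow> complex" where
  "phase_gain d lam N th th2 ph =
     (\<Sum>i<N. steer d lam N th2 i * exp (\<i> * complex_of_real (ph i)) * steer d lam N th i)"

definition aligned_phases :: "real \<Rightarrow> real \<Rightarrow> nat \<Rightarrow> real \<Rightarrow> real \<Rightarrow> nat \<Rightarrow> real" where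
  "aligned_phases d lam N th th2 i = - Arg (steer d lam N th2 i * steer d lam N th i)"

lemma norm_phase_gain_le: "cmod (phase_gain d lam N th th2 ph) \<le> real N"
proof -
  have "cmod (phase_gain d lam N th th2 ph)
      \<le> (\<Sum>i<N. cmod (steer d lam N th2 i * exp (\<i> * complex_of_real (ph i)) * steer d lam N th i))"
    unfolding phase_gain_def by (rule norm_sum)
  also have "\<dots> = real N"
    by (simp add: norm_mult norm_exp_i_times)
  finally show ?thesis .
qed

lemma phase_gain_aligned: "phase_gain d lam N th th2 (aligned_phases d lam N th th2) = real N"
proof -
  have "steer d lam N th2 i * exp (\<i> * complex_of_real (aligned_phases d lam N th th2 i))
      * steer d lam N th i = 1" for i
    using exp_neg_Arg_mult[of "steer d lam N th2 i * steer d lam N th i"]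
    by (simp add: aligned_phases_def norm_mult mult_ac)
  then show ?thesis
    by (simp add: phase_gain_def)
qed

lemma sum_Gr_Phi_steer:
  "(\<Sum>i<N. \<Sum>i'<N. Gr d lam N Mr L th1 th2 r i * Phi ph i' i * steer d lam N th i')
   = complex_of_real (sqrt L) * steer d lam Mr th1 r * phase_gain d lam N th th2 ph"
proof -
  have "(\<Sum>i<N. \<Sum>i'<N. Gr d lam N Mr L th1 th2 r i * Phi ph i' i * steer d lam N th i')
      = (\<Sum>i<N. Gr d lam N Mr L th1 th2 r i * exp (\<i> * complex_of_real (ph i)) * steer d lam N th i)"
    by (intro sum.cong refl) (simp add: Phi_sym sum_Phi)
  then show ?thesis
    by (simp add: Gr_def phase_gain_def sum_distrib_left mult_ac)
qed

lemma sum_steer_Phi_Gt: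
  "(\<Sum>i<N. \<Sum>i'<N. steer d lam N th i * Phi ph i i' * Gt d lam N Mt L th1 th2 i' m)
   = complex_of_real (sqrt L) * steer d lam Mt th1 m * phase_gain d lam N th th2 ph"
proof -
  have "(\<Sum>i<N. \<Sum>i'<N. steer d lam N th i * Phi ph i i' * Gt d lam N Mt L th1 th2 i' m)
      = (\<Sum>i<N. steer d lam N th i * exp (\<i> * complex_of_real (ph i)) * Gt d lam N Mt L th1 th2 i m)"
    by (intro sum.cong refl) (simp add: sum_Phi)
  then show ?thesis
    by (simp add: Gt_def phase_gain_def sum_distrib_left mult_ac)
qed

lemma sqnorm_Gr_Phi_steer:
  assumes "0 \<le> L"
  shows "sqnorm Mr (\<lambda>r. \<Sum>i<N. \<Sum>i'<N. Gr d lam N Mr L th1 th2 r i * Phi ph i' i * steer d lam N th i')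
    = real Mr * L * (cmod (phase_gain d lam N th th2 ph))\<^sup>2"
  using assms by (simp add: sum_Gr_Phi_steer sqnorm_def norm_mult power_mult_distrib)

lemma quad_term_eq:
  assumes "0 \<le> L"
  shows "quad_term d lam N Mt L th th1 th2 R ph
    = complex_of_real (L * (cmod (phase_gain d lam N th th2 ph))\<^sup>2) * quad_form Mt R (steer d lam Mt th1)"
proof -
  have scale: "complex_of_real s * x * g * r * cnj (complex_of_real s * y * g)
      = complex_of_real (s * s * (cmod g)\<^sup>2) * (x * r * cnj y)" for s :: real and x y g r :: complex
    by (simp add: of_real_mult complex_norm_square mult_ac del: of_real_power)
  show ?thesis
    unfolding quad_term_def Let_def sum_steer_Phi_Gt scale
    using assms by (simp add: quad_form_def sum_distrib_left)
qed

lemma Re_SNR1_eq: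
  assumes "0 \<le> L"
  shows "Re (SNR1 d lam N Mt Mr L th th1 th2 \<alpha> \<sigma>2 R ph)
    = (cmod \<alpha>)\<^sup>2 / \<sigma>2 * real Mr * L\<^sup>2 * (cmod (phase_gain d lam N th th2 ph)) ^ 4
      * Re (quad_form Mt R (steer d lam Mt th1))"
  unfolding SNR1_def sqnorm_Gr_Phi_steer[OF assms] quad_term_eq[OF assms]
  by (simp add: Re_divide_of_real power2_eq_square power4_eq_xxxx mult_ac)

lemma Re_SNR2_eq:
  assumes "0 \<le> L"
  shows "Re (SNR2 d lam N Mt Mr L th th1 th2 \<alpha> \<sigma>2 R ph)
    = (cmod \<alpha>)\<^sup>2 / \<sigma>2 * real Mr * L * (cmod (phase_gain d lam N th th2 ph))\<^sup>2
      * Re (quad_form Mt R (steer d lam Mt th1))"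
  unfolding SNR2_def sqnorm_steer quad_term_eq[OF assms]
  by (simp add: Re_divide_of_real mult_ac)

lemma Re_SNR1_le:
  assumes "0 \<le> L" "0 < \<sigma>2" "feasible Mt P0 R"
  shows "Re (SNR1 d lam N Mt Mr L th th1 th2 \<alpha> \<sigma>2 R ph)
    \<le> (cmod \<alpha>)\<^sup>2 / \<sigma>2 * real Mr * L\<^sup>2 * real N ^ 4 * (real Mt * P0)"
proof -
  have "(cmod (phase_gain d lam N th th2 ph)) ^ 4 * Re (quad_form Mt R (steer d lam Mt th1))
      \<le> real N ^ 4 * (real Mt * P0)"
    using assms(3) psd_quad_form_nonneg[of Mt R]
    by (intro mult_mono power_mono norm_phase_gain_le feasible_quad_form_le)
      (simp_all add: feasible_def)
  then have "(cmod \<alpha>)\<^sup>2 / \<sigma>2 * real Mr * L\<^sup>2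
      * ((cmod (phase_gain d lam N th th2 ph)) ^ 4 * Re (quad_form Mt R (steer d lam Mt th1)))
      \<le> (cmod \<alpha>)\<^sup>2 / \<sigma>2 * real Mr * L\<^sup>2 * (real N ^ 4 * (real Mt * P0))"
    using assms(2) by (intro mult_left_mono) simp_all
  then show ?thesis
    unfolding Re_SNR1_eq[OF assms(1)] by (simp only: mult.assoc)
qed

lemma Re_SNR2_scaled_le_Re_SNR1_aligned:
  assumes "0 \<le> L" "0 < \<sigma>2" "feasible Mt P0 R"
  shows "L * (real N)\<^sup>2 * Re (SNR2 d lam N Mt Mr L th th1 th2 \<alpha> \<sigma>2 R ph)
    \<le> Re (SNR1 d lam N Mt Mr L th th1 th2 \<alpha> \<sigma>2 R (aligned_phases d lam N th th2))"
proof -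
  have "(cmod (phase_gain d lam N th th2 ph))\<^sup>2 * Re (quad_form Mt R (steer d lam Mt th1))
      \<le> (real N)\<^sup>2 * Re (quad_form Mt R (steer d lam Mt th1))"
    using assms(3) psd_quad_form_nonneg[of Mt R]
    by (intro mult_right_mono power_mono norm_phase_gain_le) (simp_all add: feasible_def)
  then have "(cmod \<alpha>)\<^sup>2 / \<sigma>2 * real Mr * L\<^sup>2 * (real N)\<^sup>2
      * ((cmod (phase_gain d lam N th th2 ph))\<^sup>2 * Re (quad_form Mt R (steer d lam Mt th1)))
      \<le> (cmod \<alpha>)\<^sup>2 / \<sigma>2 * real Mr * L\<^sup>2 * (real N)\<^sup>2
      * ((real N)\<^sup>2 * Re (quad_form Mt R (steer d lam Mt th1)))"
    using assms(1,2) by (intro mult_left_mono) simp_all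
  then show ?thesis
    unfolding Re_SNR1_eq[OF assms(1)] Re_SNR2_eq[OF assms(1)] phase_gain_aligned
    by (simp add: power2_eq_square power4_eq_xxxx mult_ac)
qed

lemma Re_SNR1_uniform_aligned:
  assumes "0 \<le> L" "0 < Mt"
  shows "Re (SNR1 d lam N Mt Mr L th th1 th2 \<alpha> \<sigma>2
      (\<lambda>i j. if i = j then complex_of_real (P0 / real Mt) else 0) (aligned_phases d lam N th th2))
    = (cmod \<alpha>)\<^sup>2 / \<sigma>2 * real Mr * L\<^sup>2 * real N ^ 4 * P0"
  using assms by (simp add: Re_SNR1_eq phase_gain_aligned quad_form_scalar_matrix sqnorm_steer)

theorem theorem1:
  fixes d lam P0 \<sigma>2 L th th1 th2 :: real and N Mt Mr :: nat and \<alpha> :: complex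
  assumes "d > 0" and "lam > 0"
    and "N > 0" and "Mt > 0" and "Mr > 0"
    and "P0 > 0" and "\<sigma>2 > 0" and "\<alpha> \<noteq> 0" and "L > 0"
    and "real N > 1 / sqrt L"
  shows "(SUP (R, ph) \<in> {(R, ph). feasible Mt P0 R}. Re (SNR1 d lam N Mt Mr L th th1 th2 \<alpha> \<sigma>2 R ph))
       > (SUP (R, ph) \<in> {(R, ph). feasible Mt P0 R}. Re (SNR2 d lam N Mt Mr L th th1 th2 \<alpha> \<sigma>2 R ph))"
proof -
  let ?A = "{(R, ph). feasible Mt P0 R}"
  let ?SNR1 = "\<lambda>(R, ph). Re (SNR1 d lam N Mt Mr L th th1 th2 \<alpha> \<sigma>2 R ph)"
  let ?SNR2 = "\<lambda>(R, ph). Re (SNR2 d lam N Mt Mr L th th1 th2 \<alpha> \<sigma>2 R ph)"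
  let ?R0 = "\<lambda>i j. if i = j then complex_of_real (P0 / real Mt) else 0"
  let ?ph0 = "aligned_phases d lam N th th2"
  have L: "0 \<le> L" using \<open>L > 0\<close> by simp
  have "1 < (real N * sqrt L)\<^sup>2"
    using assms(9,10) by (simp add: divide_less_eq one_less_power)
  also have "\<dots> = L * (real N)\<^sup>2"
    using L by (simp add: power_mult_distrib)
  finally have "1 < L * (real N)\<^sup>2" .
  moreover have "bdd_above (?SNR1 ` ?A)"
    using Re_SNR1_le[OF L \<open>\<sigma>2 > 0\<close>] by (intro bdd_aboveI2) auto
  moreover have "(?R0, ?ph0) \<in> ?A" "0 < ?SNR1 (?R0, ?ph0)"
    using assms by (simp_all add: feasible_uniform_power Re_SNR1_uniform_aligned)
  moreover have "\<exists>y\<in>?A. L * (real N)\<^sup>2 * ?SNR2 x \<le> ?SNR1 y" if "x \<in> ?A" for x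
    using that Re_SNR2_scaled_le_Re_SNR1_aligned[OF L \<open>\<sigma>2 > 0\<close>] by force
  ultimately show ?thesis
    by (intro SUP_less_SUP_scaled)
qed

end
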